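(* Let $\mathcal M$ be a structural causal model with discrete variables $C$, binary $X$ (values $x,x'$), discrete $Z$ and binary $Y$ (values $y,y'$), given by structural equations $X=f_X(C,U_X)$, $Z=f_Z(X,C,U_Z)$, $Y=f_Y(Z,C,U_Y)$, with $C,U_X,U_Z,U_Y$ mutually independent. Fix $c$ with $P(c)>0$. Then $$\max\{0,\ P(y_x\mid c)-P(y_{x'}\mid c),\ P(y\mid c)-P(y_{x'}\mid c),\ P(y_x\mid c)-P(y\mid c)\}\le P(y_x,y'_{x'}\mid c)$$ and $$P(y_x,y'_{x'}\mid c)\le\min\Big\{P(y_x\mid c),\ P(y'_{x'}\mid c),\ P(y,x\mid c)+P(y',x'\mid c),\ P(y_x\mid c)-P(y_{x'}\mid c)+P(y,x'\mid c)+P(y',x\mid c),$$ $$\qquad\sum_z\sum_{z'\ne z}\min\{P(y\mid z,c),P(y'\mid z',c)\}\cdot\min\{P(z\mid x,c),P(z'\mid x',c)\}\Big\},$$ where $z,z'$ range over values of $Z$ (with the conditional probabilities defined).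
   Context: For a value $x$ of $X$, $Y_x$ denotes the counterfactual variable "the value $Y$ would take had $X$ been set to $x$"; $y_x$ is the event $Y_x=y$. Unsubscripted probabilities such as $P(y\mid z,c)$, $P(z\mid x,c)$ are observational. Consistency: $X=x$ implies $Y_x=Y$. *)

theory Defs
  imports "HOL-Probability.Probability"
begin

definition SCM :: "'c pmf \<Rightarrow> 'ux pmf \<Rightarrow> 'uz pmf \<Rightarrow> 'uy pmf \<Rightarrow> ('c \<times> 'ux \<times> 'uz \<times> 'uy) pmf" where
  "SCM pC pUX pUZ pUY = pair_pmf pC (pair_pmf pUX (pair_pmf pUZ pUY))"

definition varC :: "('c \<times> 'ux \<times> 'uz \<times> 'uy) \<Rightarrow> 'c" where
  "varC = (\<lambda>(c, ux, uz, uy). c)"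

definition varX :: "('c \<Rightarrow> 'ux \<Rightarrow> bool) \<Rightarrow> ('c \<times> 'ux \<times> 'uz \<times> 'uy) \<Rightarrow> bool" where
  "varX fX = (\<lambda>(c, ux, uz, uy). fX c ux)"

definition varZ :: "('c \<Rightarrow> 'ux \<Rightarrow> bool) \<Rightarrow> (bool \<Rightarrow> 'c \<Rightarrow> 'uz \<Rightarrow> 'z)
    \<Rightarrow> ('c \<times> 'ux \<times> 'uz \<times> 'uy) \<Rightarrow> 'z" where
  "varZ fX fZ = (\<lambda>(c, ux, uz, uy). fZ (fX c ux) c uz)"

definition varY :: "('c \<Rightarrow> 'ux \<Rightarrow> bool) \<Rightarrow> (bool \<Rightarrow> 'c \<Rightarrow> 'uz \<Rightarrow> 'z) \<Rightarrow> ('z \<Rightarrow> 'c \<Rightarrow> 'uy \<Rightarrow> bool)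
    \<Rightarrow> ('c \<times> 'ux \<times> 'uz \<times> 'uy) \<Rightarrow> bool" where
  "varY fX fZ fY = (\<lambda>(c, ux, uz, uy). fY (fZ (fX c ux) c uz) c uy)"

text \<open>Counterfactual Y_x: the value Y would take had X been set to x.\<close>
definition cfY :: "(bool \<Rightarrow> 'c \<Rightarrow> 'uz \<Rightarrow> 'z) \<Rightarrow> ('z \<Rightarrow> 'c \<Rightarrow> 'uy \<Rightarrow> bool) \<Rightarrow> bool
    \<Rightarrow> ('c \<times> 'ux \<times> 'uz \<times> 'uy) \<Rightarrow> bool" where
  "cfY fZ fY x = (\<lambda>(c, ux, uz, uy). fY (fZ x c uz) c uy)"

definition cprob :: "'a pmf \<Rightarrow> ('a \<Rightarrow> bool) \<Rightarrow> ('a \<Rightarrow> bool) \<Rightarrow> real" where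
  "cprob M A B = measure_pmf.prob M {w. A w \<and> B w} / measure_pmf.prob M {w. B w}"

end

theory Submission
  imports Defs
begin

text \<open>
  Since C is independent of the noise, conditioning on C = c turns the model into the chain
  U_X \<rightarrow> X \<rightarrow> Z \<rightarrow> Y with the mechanisms evaluated at c. There the
  Tian-Pearl bounds on the probability of necessity and sufficiency P(y_x, y'_x') are linear
  consequences of the eight atoms of the joint law of (X, Y_x, Y_x') and of consistency
  Y = Y_X. For the mediator bound, Y_x = y and Y_x' = y' force Z_x and Z_x' to take distinct
  values z, z', and the event then splits into the independent events Z_x = z, Z_x' = z' of U_Z
  and f_Y(z, U_Y) = y, f_Y(z', U_Y) = y' of U_Y. The first has probability at most
  min(P(z|x), P(z'|x')) and the second at most min(P(y|z), P(y'|z')), because the noise of each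
  mechanism is independent of its parent.
\<close>

lemma measure_pair_pmf_Times:
  "measure_pmf.prob (pair_pmf M N) (A \<times> B) = measure_pmf.prob M A * measure_pmf.prob N B"
proof -
  have "emeasure (pair_pmf M N) (A \<times> B) = (\<integral>\<^sup>+w. indicator (A \<times> B) w \<partial>pair_pmf M N)"
    by simp
  also have "\<dots> = (\<integral>\<^sup>+a. indicator A a * emeasure N B \<partial>M)"
    by (simp add: nn_integral_pair_pmf' indicator_times nn_integral_cmult)
  also have "\<dots> = emeasure M A * emeasure N B"
    by (simp add: nn_integral_multc)
  finally have "ennreal (measure_pmf.prob (pair_pmf M N) (A \<times> B))
      = ennreal (measure_pmf.prob M A * measure_pmf.prob N B)"
    by (simp add: measure_pmf.emeasure_eq_measure ennreal_mult)
  then show ?thesis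
    by simp
qed

lemma measure_pair_pmf_fst:
  "measure_pmf.prob (pair_pmf M N) {w. P (fst w)} = measure_pmf.prob M {a. P a}"
proof -
  have event: "{w. P (fst w)} = {a. P a} \<times> UNIV"
    by auto
  show ?thesis
    unfolding event measure_pair_pmf_Times by simp
qed

lemma measure_pair_pmf_snd:
  "measure_pmf.prob (pair_pmf M N) {w. P (snd w)} = measure_pmf.prob N {b. P b}"
proof -
  have event: "{w. P (snd w)} = UNIV \<times> {b. P b}"
    by auto
  show ?thesis
    unfolding event measure_pair_pmf_Times by simp
qed

lemma measure_pair_pmf_fst_eq:
  "measure_pmf.prob (pair_pmf M N) {w. P w \<and> fst w = a} = pmf M a * measure_pmf.prob N {b. P (a, b)}"
proof -
  have "{w. P w \<and> fst w = a} = {a} \<times> {b. P (a, b)}"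
    by auto
  then show ?thesis
    by (simp add: measure_pair_pmf_Times measure_pmf_single)
qed

lemma cprob_pair_pmf_fst_eq:
  assumes "pmf M a > 0"
  shows "cprob (pair_pmf M N) P (\<lambda>w. Q w \<and> fst w = a) = cprob N (\<lambda>b. P (a, b)) (\<lambda>b. Q (a, b))"
  using measure_pair_pmf_fst_eq[of M N "\<lambda>w. P w \<and> Q w" a] measure_pair_pmf_fst_eq[of M N Q a] assms
  by (simp add: cprob_def conj_assoc)

lemma cprob_True: "cprob M P (\<lambda>_. True) = measure_pmf.prob M {w. P w}"
  by (simp add: cprob_def)

lemma cprob_nonneg: "cprob M P Q \<ge> 0"
  by (simp add: cprob_def)

lemma cprob_eq_0_if_measure_eq_0:
  assumes "measure_pmf.prob M {w. P w} = 0"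
  shows "cprob M P Q = 0"
proof -
  have "measure_pmf.prob M {w. P w \<and> Q w} \<le> measure_pmf.prob M {w. P w}"
    by (rule measure_pmf.finite_measure_mono) auto
  then show ?thesis
    using assms measure_nonneg[of M "{w. P w \<and> Q w}"] by (simp add: cprob_def)
qed

lemma cprob_map_pmf: "cprob (map_pmf f M) P Q = cprob M (\<lambda>w. P (f w)) (\<lambda>w. Q (f w))"
  by (simp add: cprob_def vimage_def)

lemma cprob_pair_pmf_mechanism:
  assumes "measure_pmf.prob M {a. V a = v} > 0"
  shows "cprob (pair_pmf M N) (\<lambda>w. P (V (fst w)) (snd w)) (\<lambda>w. V (fst w) = v)
    = measure_pmf.prob N {b. P v b}"
proof -
  have events: "{w. P (V (fst w)) (snd w) \<and> V (fst w) = v} = {a. V a = v} \<times> {b. P v b}"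
    "{w. V (fst w) = v} = {a. V a = v} \<times> UNIV"
    by auto
  show ?thesis
    using assms unfolding cprob_def events measure_pair_pmf_Times by simp
qed

lemma measure_pair_pmf_eq_nn_integral_map:
  "ennreal (measure_pmf.prob (pair_pmf M N) {w. R (f (fst w)) (snd w)})
     = (\<integral>\<^sup>+s. ennreal (pmf (map_pmf f M) s * measure_pmf.prob N {b. R s b}) \<partial>count_space UNIV)"
proof -
  have "ennreal (measure_pmf.prob (pair_pmf M N) {w. R (f (fst w)) (snd w)})
      = (\<integral>\<^sup>+w. indicator {w. R (f (fst w)) (snd w)} w \<partial>pair_pmf M N)"
    by (simp add: measure_pmf.emeasure_eq_measure[symmetric])
  also have "\<dots> = (\<integral>\<^sup>+a. \<integral>\<^sup>+b. indicator {b. R (f a) b} b \<partial>N \<partial>M)"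
    by (simp add: nn_integral_pair_pmf' indicator_def)
  also have "\<dots> = (\<integral>\<^sup>+a. ennreal (measure_pmf.prob N {b. R (f a) b}) \<partial>M)"
    by (simp add: measure_pmf.emeasure_eq_measure)
  also have "\<dots> = (\<integral>\<^sup>+s. ennreal (measure_pmf.prob N {b. R s b}) \<partial>map_pmf f M)"
    by simp
  also have "\<dots> = (\<integral>\<^sup>+s. ennreal (pmf (map_pmf f M) s) * ennreal (measure_pmf.prob N {b. R s b}) \<partial>count_space UNIV)"
    by (rule nn_integral_measure_pmf)
  finally show ?thesis
    by (simp add: ennreal_mult)
qed

lemma sum_UNIV_bool3:
  "(\<Sum>(A, B, C)\<in>UNIV. f A B C) = f False False False + f False False True + f False True False
     + f False True True + f True False False + f True False True + f True True False + f True True True"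
  unfolding UNIV_Times_UNIV[symmetric] UNIV_bool by (simp add: sum.cartesian_product' algebra_simps)

lemma measure_pmf_eq_sum_bool_atoms:
  fixes a u v :: "'n \<Rightarrow> bool"
  shows "measure_pmf.prob N {r. \<Phi> (a r) (u r) (v r)}
    = (\<Sum>(A, B, C)\<in>UNIV. if \<Phi> A B C then measure_pmf.prob N {r. a r = A \<and> u r = B \<and> v r = C} else 0)"
proof -
  let ?Q = "map_pmf (\<lambda>r. (a r, u r, v r)) N"
  have "measure_pmf.prob N {r. \<Phi> (a r) (u r) (v r)} = measure_pmf.prob ?Q {(A, B, C). \<Phi> A B C}"
    by (simp add: vimage_def)
  also have "\<dots> = (\<Sum>t\<in>{(A, B, C). \<Phi> A B C}. pmf ?Q t)"
    by (rule measure_measure_pmf_finite) (rule finite)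
  also have "\<dots> = (\<Sum>(A, B, C)\<in>UNIV. if \<Phi> A B C then pmf ?Q (A, B, C) else 0)"
    by (simp add: sum.If_cases case_prod_unfold Int_def)
  also have "\<dots> = (\<Sum>(A, B, C)\<in>UNIV. if \<Phi> A B C then measure_pmf.prob N {r. a r = A \<and> u r = B \<and> v r = C} else 0)"
    by (auto intro!: sum.cong simp: pmf_map vimage_def)
  finally show ?thesis .
qed

lemma pns_bounds:
  fixes N :: "'n pmf" and a u v w :: "'n \<Rightarrow> bool" and x y :: bool
  assumes consistency: "\<And>r. w r = (if a r = x then u r else v r)"
  shows "Max {0, measure_pmf.prob N {r. u r = y} - measure_pmf.prob N {r. v r = y},
               measure_pmf.prob N {r. w r = y} - measure_pmf.prob N {r. v r = y},
               measure_pmf.prob N {r. u r = y} - measure_pmf.prob N {r. w r = y}}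
           \<le> measure_pmf.prob N {r. u r = y \<and> v r = (\<not> y)}
     \<and> measure_pmf.prob N {r. u r = y \<and> v r = (\<not> y)}
           \<le> Min {measure_pmf.prob N {r. u r = y}, measure_pmf.prob N {r. v r = (\<not> y)},
                  measure_pmf.prob N {r. w r = y \<and> a r = x} + measure_pmf.prob N {r. w r = (\<not> y) \<and> a r = (\<not> x)},
                  measure_pmf.prob N {r. u r = y} - measure_pmf.prob N {r. v r = y}
                   + measure_pmf.prob N {r. w r = y \<and> a r = (\<not> x)} + measure_pmf.prob N {r. w r = (\<not> y) \<and> a r = x}}"
proof -
  define p where "p A B C = measure_pmf.prob N {r. a r = A \<and> u r = B \<and> v r = C}" for A B C
  have atoms: "measure_pmf.prob N {r. \<Phi> (a r) (u r) (v r)}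
      = (\<Sum>(A, B, C)\<in>UNIV. if \<Phi> A B C then p A B C else 0)" for \<Phi>
    unfolding p_def by (rule measure_pmf_eq_sum_bool_atoms)
  have nonneg: "p A B C \<ge> 0" for A B C
    by (simp add: p_def)
  have w_eq: "w = (\<lambda>r. if a r = x then u r else v r)"
    using consistency by blast
  show ?thesis
    unfolding w_eq atoms[of "\<lambda>A B C. B = y"] atoms[of "\<lambda>A B C. C = y"] atoms[of "\<lambda>A B C. C = (\<not> y)"]
      atoms[of "\<lambda>A B C. B = y \<and> C = (\<not> y)"] atoms[of "\<lambda>A B C. (if A = x then B else C) = y"]
      atoms[of "\<lambda>A B C. (if A = x then B else C) = y \<and> A = x"]
      atoms[of "\<lambda>A B C. (if A = x then B else C) = y \<and> A = (\<not> x)"]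
      atoms[of "\<lambda>A B C. (if A = x then B else C) = (\<not> y) \<and> A = x"]
      atoms[of "\<lambda>A B C. (if A = x then B else C) = (\<not> y) \<and> A = (\<not> x)"]
    unfolding sum_UNIV_bool3
    by (cases x; cases y; simp; smt (verit) nonneg)
qed

lemma pns_le_mediator_bound:
  fixes pUX :: "'ux pmf" and pUZ :: "'uz pmf" and pUY :: "'uy pmf"
    and gX :: "'ux \<Rightarrow> bool" and gZ :: "bool \<Rightarrow> 'uz \<Rightarrow> 'z" and gY :: "'z \<Rightarrow> 'uy \<Rightarrow> bool"
  defines "N \<equiv> pair_pmf pUX (pair_pmf pUZ pUY)"
    and "X \<equiv> \<lambda>(ux, uz, uy). gX ux"
    and "Z \<equiv> \<lambda>(ux, uz, uy). gZ (gX ux) uz"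
    and "Y \<equiv> \<lambda>(ux, uz, uy). gY (gZ (gX ux) uz) uy"
    and "Y_do \<equiv> \<lambda>b (ux, uz, uy). gY (gZ b uz) uy"
  assumes treated: "measure_pmf.prob N {r. X r = x} > 0"
    and untreated: "measure_pmf.prob N {r. X r = (\<not> x)} > 0"
  shows "ennreal (measure_pmf.prob N {r. Y_do x r = y \<and> Y_do (\<not> x) r = (\<not> y)})
    \<le> (\<integral>\<^sup>+ p. ennreal (min (cprob N (\<lambda>r. Y r = y) (\<lambda>r. Z r = fst p))
                              (cprob N (\<lambda>r. Y r = (\<not> y)) (\<lambda>r. Z r = snd p))
                        * min (cprob N (\<lambda>r. Z r = fst p) (\<lambda>r. X r = x))
                              (cprob N (\<lambda>r. Z r = snd p) (\<lambda>r. X r = (\<not> x))))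
         \<partial>count_space {(z, z'). z \<noteq> z'})"
proof -
  define D where "D = map_pmf (\<lambda>uz. (gZ x uz, gZ (\<not> x) uz)) pUZ"
  define H where "H p = measure_pmf.prob pUY {uy. gY (fst p) uy = y \<and> gY (snd p) uy = (\<not> y)}" for p
  have prob_X: "measure_pmf.prob N {r. X r = b} = measure_pmf.prob pUX {ux. gX ux = b}" for b
    using measure_pair_pmf_fst[of pUX _ "\<lambda>ux. gX ux = b"] by (simp add: N_def X_def split_beta)
  have Z_given_X: "cprob N (\<lambda>r. Z r = z) (\<lambda>r. X r = b) = measure_pmf.prob pUZ {uz. gZ b uz = z}"
    if "measure_pmf.prob N {r. X r = b} > 0" for z b
    using cprob_pair_pmf_mechanism[of pUX gX b "pair_pmf pUZ pUY" "\<lambda>v q. gZ v (fst q) = z"] that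
      measure_pair_pmf_fst[of pUZ pUY "\<lambda>uz. gZ b uz = z"]
    unfolding prob_X by (simp add: N_def X_def Z_def split_beta)
  \<comment> \<open>Regrouping the noise as ((U_X, U_Z), U_Y) makes Z a function of the first factor.\<close>
  have N_assoc: "N = map_pmf (\<lambda>((ux, uz), uy). (ux, uz, uy)) (pair_pmf (pair_pmf pUX pUZ) pUY)"
    by (simp add: N_def pair_pair_pmf map_pmf_comp split_beta)
  have Y_given_Z: "cprob N (\<lambda>r. Y r = b) (\<lambda>r. Z r = z) = measure_pmf.prob pUY {uy. gY z uy = b}"
    if "measure_pmf.prob N {r. Z r = z} > 0" for z b
    using cprob_pair_pmf_mechanism[of "pair_pmf pUX pUZ" "\<lambda>(ux, uz). gZ (gX ux) uz" z pUY "\<lambda>v uy. gY v uy = b"] that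
      measure_pair_pmf_fst[of "pair_pmf pUX pUZ" pUY "\<lambda>(ux, uz). gZ (gX ux) uz = z"]
    unfolding N_assoc by (simp add: cprob_map_pmf Y_def Z_def split_beta vimage_def)
  have H_diag: "H (z, z) = 0" for z
  proof -
    have empty: "{uy. gY z uy = y \<and> gY z uy = (\<not> y)} = {}"
      by auto
    show ?thesis
      unfolding H_def fst_conv snd_conv empty by simp
  qed
  have "ennreal (measure_pmf.prob N {r. Y_do x r = y \<and> Y_do (\<not> x) r = (\<not> y)})
      = ennreal (measure_pmf.prob (pair_pmf pUZ pUY)
          {q. gY (gZ x (fst q)) (snd q) = y \<and> gY (gZ (\<not> x) (fst q)) (snd q) = (\<not> y)})"
    using measure_pair_pmf_snd[of pUX "pair_pmf pUZ pUY"
        "\<lambda>q. gY (gZ x (fst q)) (snd q) = y \<and> gY (gZ (\<not> x) (fst q)) (snd q) = (\<not> y)"]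
    by (simp add: N_def Y_do_def case_prod_unfold)
  also have "\<dots> = (\<integral>\<^sup>+p. ennreal (pmf D p * H p) \<partial>count_space UNIV)"
    using measure_pair_pmf_eq_nn_integral_map[where M = pUZ and N = pUY
        and f = "\<lambda>uz. (gZ x uz, gZ (\<not> x) uz)" and R = "\<lambda>p uy. gY (fst p) uy = y \<and> gY (snd p) uy = (\<not> y)"]
    by (simp add: D_def H_def)
  also have "\<dots> = (\<integral>\<^sup>+p. ennreal (pmf D p * H p) \<partial>count_space {(z, z'). z \<noteq> z'})"
    by (subst (2) nn_integral_count_space_indicator)
      (auto intro!: nn_integral_cong simp: H_diag indicator_def)
  finally have decomposition: "ennreal (measure_pmf.prob N {r. Y_do x r = y \<and> Y_do (\<not> x) r = (\<not> y)})
      = (\<integral>\<^sup>+p. ennreal (pmf D p * H p) \<partial>count_space {(z, z'). z \<noteq> z'})" .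
  have pointwise: "pmf D p * H p
      \<le> min (cprob N (\<lambda>r. Y r = y) (\<lambda>r. Z r = fst p)) (cprob N (\<lambda>r. Y r = (\<not> y)) (\<lambda>r. Z r = snd p))
        * min (cprob N (\<lambda>r. Z r = fst p) (\<lambda>r. X r = x)) (cprob N (\<lambda>r. Z r = snd p) (\<lambda>r. X r = (\<not> x)))"
    for p
  proof -
    obtain z z' where p: "p = (z, z')"
      by fastforce
    have D_le: "pmf D p \<le> measure_pmf.prob pUZ {uz. gZ x uz = z}"
      "pmf D p \<le> measure_pmf.prob pUZ {uz. gZ (\<not> x) uz = z'}"
      unfolding D_def p pmf_map by (auto intro!: measure_pmf.finite_measure_mono)
    have H_le: "H p \<le> measure_pmf.prob pUY {uy. gY z uy = y}"
      "H p \<le> measure_pmf.prob pUY {uy. gY z' uy = (\<not> y)}"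
      unfolding H_def p by (auto intro!: measure_pmf.finite_measure_mono)
    show ?thesis
    proof (cases "measure_pmf.prob N {r. Z r = z} > 0 \<and> measure_pmf.prob N {r. Z r = z'} > 0")
      case True
      then show ?thesis
        using D_le H_le treated untreated
        by (simp add: p Z_given_X Y_given_Z mult.commute[of "pmf D _"] mult_mono)
    next
      \<comment> \<open>Then a factor P(y|z) is the junk value 0, but P(z|x) = 0 as well and the term vanishes.\<close>
      case False
      then have "measure_pmf.prob N {r. Z r = z} = 0 \<or> measure_pmf.prob N {r. Z r = z'} = 0"
        using measure_nonneg[of N "{r. Z r = z}"] measure_nonneg[of N "{r. Z r = z'}"] by auto
      then have "cprob N (\<lambda>r. Z r = z) (\<lambda>r. X r = x) = 0 \<or> cprob N (\<lambda>r. Z r = z') (\<lambda>r. X r = (\<not> x)) = 0"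
        using cprob_eq_0_if_measure_eq_0 by blast
      then have "pmf D p = 0"
        using D_le treated untreated by (auto simp: Z_given_X intro: order.antisym)
      then show ?thesis
        by (simp add: cprob_nonneg)
    qed
  qed
  show ?thesis
    unfolding decomposition by (intro nn_integral_mono ennreal_leI pointwise)
qed

theorem lemma6:
  fixes pC :: "'c pmf" and pUX :: "'ux pmf" and pUZ :: "'uz pmf" and pUY :: "'uy pmf"
    and fX :: "'c \<Rightarrow> 'ux \<Rightarrow> bool"
    and fZ :: "bool \<Rightarrow> 'c \<Rightarrow> 'uz \<Rightarrow> 'z"
    and fY :: "'z \<Rightarrow> 'c \<Rightarrow> 'uy \<Rightarrow> bool"
    and x y :: bool and c :: 'c
  defines "M \<equiv> SCM pC pUX pUZ pUY"
    and "x' \<equiv> \<not> x" and "y' \<equiv> \<not> y"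
    and "C \<equiv> varC" and "X \<equiv> varX fX" and "Z \<equiv> varZ fX fZ" and "Y \<equiv> varY fX fZ fY"
    and "Yx \<equiv> cfY fZ fY x" and "Yx' \<equiv> cfY fZ fY (\<not> x)"
  assumes Pc: "measure_pmf.prob M {w. C w = c} > 0"
  shows
    "Max {0,
          cprob M (\<lambda>w. Yx w = y) (\<lambda>w. C w = c) - cprob M (\<lambda>w. Yx' w = y) (\<lambda>w. C w = c),
          cprob M (\<lambda>w. Y w = y) (\<lambda>w. C w = c) - cprob M (\<lambda>w. Yx' w = y) (\<lambda>w. C w = c),
          cprob M (\<lambda>w. Yx w = y) (\<lambda>w. C w = c) - cprob M (\<lambda>w. Y w = y) (\<lambda>w. C w = c)}
       \<le> cprob M (\<lambda>w. Yx w = y \<and> Yx' w = y') (\<lambda>w. C w = c)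
     \<and> cprob M (\<lambda>w. Yx w = y \<and> Yx' w = y') (\<lambda>w. C w = c)
       \<le> Min {cprob M (\<lambda>w. Yx w = y) (\<lambda>w. C w = c),
              cprob M (\<lambda>w. Yx' w = y') (\<lambda>w. C w = c),
              cprob M (\<lambda>w. Y w = y \<and> X w = x) (\<lambda>w. C w = c)
                + cprob M (\<lambda>w. Y w = y' \<and> X w = x') (\<lambda>w. C w = c),
              cprob M (\<lambda>w. Yx w = y) (\<lambda>w. C w = c) - cprob M (\<lambda>w. Yx' w = y) (\<lambda>w. C w = c)
                + cprob M (\<lambda>w. Y w = y \<and> X w = x') (\<lambda>w. C w = c)
                + cprob M (\<lambda>w. Y w = y' \<and> X w = x) (\<lambda>w. C w = c)}
     \<and> ((measure_pmf.prob M {w. X w = x \<and> C w = c} > 0 \<and>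
         measure_pmf.prob M {w. X w = x' \<and> C w = c} > 0) \<longrightarrow>
        ennreal (cprob M (\<lambda>w. Yx w = y \<and> Yx' w = y') (\<lambda>w. C w = c))
          \<le> (\<integral>\<^sup>+ p. 
                ennreal (min (cprob M (\<lambda>w. Y w = y) (\<lambda>w. Z w = fst p \<and> C w = c))
                             (cprob M (\<lambda>w. Y w = y') (\<lambda>w. Z w = snd p \<and> C w = c))
                       * min (cprob M (\<lambda>w. Z w = fst p) (\<lambda>w. X w = x \<and> C w = c))
                             (cprob M (\<lambda>w. Z w = snd p) (\<lambda>w. X w = x' \<and> C w = c))) \<partial>count_space {(z, z'). z \<noteq> z'}))"
proof -
  define N where "N = pair_pmf pUX (pair_pmf pUZ pUY)"
  have M_eq: "M = pair_pmf pC N"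
    by (simp add: M_def SCM_def N_def)
  have C_eq: "C = fst"
    by (simp add: C_def varC_def fun_eq_iff)
  have prob_c: "measure_pmf.prob M {w. P w \<and> C w = c} = pmf pC c * measure_pmf.prob N {r. P (c, r)}" for P
    unfolding M_eq C_eq by (rule measure_pair_pmf_fst_eq)
  have pc: "pmf pC c > 0"
    using Pc prob_c[of "\<lambda>_. True"] by (simp add: zero_less_mult_iff)
  have given_c: "cprob M P (\<lambda>w. Q w \<and> C w = c) = cprob N (\<lambda>r. P (c, r)) (\<lambda>r. Q (c, r))" for P Q
    unfolding M_eq C_eq using pc by (rule cprob_pair_pmf_fst_eq)
  have given_c_only: "cprob M P (\<lambda>w. C w = c) = measure_pmf.prob N {r. P (c, r)}" for P
    using given_c[of P "\<lambda>_. True"] by (simp add: cprob_True)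
  have consistency: "Y (c, r) = (if X (c, r) = x then Yx (c, r) else Yx' (c, r))" for r
    by (simp add: Y_def X_def Yx_def Yx'_def varY_def varX_def cfY_def split_beta)
  note bounds = pns_bounds[where N = N and a = "\<lambda>r. X (c, r)" and u = "\<lambda>r. Yx (c, r)"
      and v = "\<lambda>r. Yx' (c, r)" and w = "\<lambda>r. Y (c, r)", OF consistency]
  note mediator = pns_le_mediator_bound[where pUX = pUX and pUZ = pUZ and pUY = pUY
      and gX = "fX c" and gZ = "\<lambda>b. fZ b c" and gY = "\<lambda>z. fY z c" and x = x and y = y]
  show ?thesis
    unfolding x'_def y'_def given_c given_c_only prob_c
    using bounds mediator pc
    by (simp add: zero_less_mult_iff N_def X_def Z_def Y_def Yx_def Yx'_def varX_def varZ_def varY_def cfY_def)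
qed

end
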